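(* Let $\mathcal T,\mathcal A:\mathbb{R}L_2^{m,n}[a,b]\to\mathbb{R}L_2^{m,n}[a,b]$, $\mathcal B:\mathbb{R}^{n_w}\to\mathbb{R}L_2^{m,n}[a,b]$ and $\mathcal C:\mathbb{R}L_2^{m,n}[a,b]\to\mathbb{R}^{n_z}$ be 4-PI operators. Suppose that both the auxiliary PIE associated with $(\mathcal T,\mathcal A,\mathcal B,\mathcal C)$ and the dual auxiliary PIE associated with $(\mathcal T^*,\mathcal A^*,\mathcal C^*,\mathcal B^* )$ are well-posed. Then $$\|G(\mathcal T,\mathcal A,\mathcal B,\mathcal C)\|_{ip}=\|G(\mathcal T^*,\mathcal A^*,\mathcal C^*,\mathcal B^* )\|_{ip}.$$
   Context: Notation: $\mathbb{R}L_2^{m,n}[a,b]:=\mathbb{R}^m\times L_2^n[a,b]$, the Hilbert space with inner product $\langle (x,\mathbf x),(y,\mathbf y)\rangle=x^\top y+\int_a^b \mathbf x(s)^\top\mathbf y(s)\,ds$. Finite-dimensional spaces $\mathbb{R}^k$ carry the Euclidean inner product and norm, and are identified with $\mathbb{R}L_2^{k,0}$. For a bounded operator $\mathcal P$ between such spaces, $\mathcal P^*$ is its Hilbert adjoint. A 4-PI operator $\mathcal P:\mathbb{R}L_2^{m_1,n_1}[a,b]\to\mathbb{R}L_2^{m_2,n_2}[a,b]$ is one of the form $$\mathcal P\begin{bmatrix}x\\ \mathbf x\end{bmatrix}(s)=\begin{bmatrix}Px+\int_a^b Q_1(\theta)\mathbf x(\theta)\,d\theta\\ Q_2(s)x+R_0(s)\mathbf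 x(s)+\int_a^s R_1(s,\theta)\mathbf x(\theta)\,d\theta+\int_s^b R_2(s,\theta)\mathbf x(\theta)\,d\theta\end{bmatrix},$$ where $P$ is a real matrix and $Q_1,Q_2,R_0,R_1,R_2$ are real matrix-valued polynomials of appropriate dimensions. Such operators are bounded. Auxiliary PIE: given $v\in\mathbb{R}^{n_w}$, a solution is a function $\mathbf x:[0,\infty)\to\mathbb{R}L_2^{m,n}[a,b]$, continuously differentiable in $t$, such that $\frac{d}{dt}(\mathcal T\mathbf x(t))=\mathcal A\mathbf x(t)$ for all $t\ge0$, $\mathcal T\mathbf x(0)=\mathcal B v$, with output $z(t)=\mathcal C\mathbf x(t)\in\mathbb{R}^{n_z}$. The auxiliary PIE is well-posed if for each $v$ such a solution exists and is unique. Dual auxiliary PIE: given $\bar v\in\mathbb{R}^{n_z}$, a solution is a continuously differentiable $\bar{\mathbf x}:[0,\infty)\to\mathbb{R}L_2^{m,n}[a,b]$ with $\frac{d}{dt}(\mathcal T^*\bar{\mathbf x}(t))=\mathcal A^*\bar{\mathbf x}(t)$ for all $t\ge0$, $\mathcal T^*\bar{\mathbf x}(0)=\mathcal C^*\bar v$, and output $\bar z(t)=\mathcal B^*\bar{\mathbf x}(t)\in\mathbb{R}^{n_w}$. It is well-posed if for each $\bar v$ such a solution exists and is unique. Impulse-to-peak norm: $\|G(\mathcal T,\mathcal A,\mathcal B,\mathcal C)\|_{ip}:=\sup\{\sup_{t\ge0}\|z(t)\|: \|v\|=1,\ z \text{ output of a solution of the auxiliary PIE with data } v\}$, and analogously $\|G(\mathcal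 T^*,\mathcal A^*,\mathcal C^*,\mathcal B^* )\|_{ip}:=\sup\{\sup_{t\ge0}\|\bar z(t)\|:\|\bar v\|=1,\ \bar z\text{ output of a solution of the dual auxiliary PIE with data }\bar v\}$ (values in $[0,\infty]$). *)

theory Defs
  imports "HOL-Analysis.Analysis"
begin

text \<open>Elements of RL2^{m,n}[a,b] are represented by pairs (x, f) with
  x :: nat => real (only components i < m matter) and
  f :: real => nat => real (only components j < n on [a,b] matter).
  All equalities in the Hilbert space are taken modulo the seminorm
  (i.e. up to null sets).\<close>

type_synonym rl2 = "(nat \<Rightarrow> real) \<times> (real \<Rightarrow> nat \<Rightarrow> real)"

definition in_RL2 :: "real \<Rightarrow> real \<Rightarrow> nat \<Rightarrow> nat \<Rightarrow> rl2 \<Rightarrow> bool" where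
  "in_RL2 a b m n u \<longleftrightarrow>
     (\<forall>j<n. (\<lambda>s. snd u s j) \<in> borel_measurable (lebesgue_on {a..b})
          \<and> integrable (lebesgue_on {a..b}) (\<lambda>s. (snd u s j)\<^sup>2))"

definition rl_diff :: "rl2 \<Rightarrow> rl2 \<Rightarrow> rl2" where
  "rl_diff u v = (\<lambda>i. fst u i - fst v i, \<lambda>s j. snd u s j - snd v s j)"

definition rl_scale :: "real \<Rightarrow> rl2 \<Rightarrow> rl2" where
  "rl_scale c u = (\<lambda>i. c * fst u i, \<lambda>s j. c * snd u s j)"

definition rl_ip :: "real \<Rightarrow> real \<Rightarrow> nat \<Rightarrow> nat \<Rightarrow> rl2 \<Rightarrow> rl2 \<Rightarrow> real" where
  "rl_ip a b m n u v = (\<Sum>i<m. fst u i * fst v i)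
      + integral\<^sup>L (lebesgue_on {a..b}) (\<lambda>s. \<Sum>j<n. snd u s j * snd v s j)"

definition rl_norm :: "real \<Rightarrow> real \<Rightarrow> nat \<Rightarrow> nat \<Rightarrow> rl2 \<Rightarrow> real" where
  "rl_norm a b m n u = sqrt (rl_ip a b m n u u)"

definition poly_fun :: "(real \<Rightarrow> real) \<Rightarrow> bool" where
  "poly_fun g \<longleftrightarrow> (\<exists>p :: real poly. \<forall>s. g s = poly p s)"

definition bipoly_fun :: "(real \<Rightarrow> real \<Rightarrow> real) \<Rightarrow> bool" where
  "bipoly_fun g \<longleftrightarrow> (\<exists>N (c :: nat \<Rightarrow> nat \<Rightarrow> real).
      \<forall>s \<theta>. g s \<theta> = (\<Sum>i\<le>N. \<Sum>j\<le>N. c i j * s ^ i * \<theta> ^ j))"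

definition PI_params :: "nat \<Rightarrow> nat \<Rightarrow> nat \<Rightarrow> nat \<Rightarrow>
    (real \<Rightarrow> nat \<Rightarrow> nat \<Rightarrow> real) \<Rightarrow> (real \<Rightarrow> nat \<Rightarrow> nat \<Rightarrow> real) \<Rightarrow>
    (real \<Rightarrow> nat \<Rightarrow> nat \<Rightarrow> real) \<Rightarrow> (real \<Rightarrow> real \<Rightarrow> nat \<Rightarrow> nat \<Rightarrow> real) \<Rightarrow>
    (real \<Rightarrow> real \<Rightarrow> nat \<Rightarrow> nat \<Rightarrow> real) \<Rightarrow> bool" where
  "PI_params m1 n1 m2 n2 Q1 Q2 R0 R1 R2 \<longleftrightarrow>
     (\<forall>i<m2. \<forall>j<n1. poly_fun (\<lambda>s. Q1 s i j)) \<and>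
     (\<forall>i<n2. \<forall>j<m1. poly_fun (\<lambda>s. Q2 s i j)) \<and>
     (\<forall>i<n2. \<forall>j<n1. poly_fun (\<lambda>s. R0 s i j)) \<and>
     (\<forall>i<n2. \<forall>j<n1. bipoly_fun (\<lambda>s \<theta>. R1 s \<theta> i j)) \<and>
     (\<forall>i<n2. \<forall>j<n1. bipoly_fun (\<lambda>s \<theta>. R2 s \<theta> i j))"

definition PI4 :: "real \<Rightarrow> real \<Rightarrow> nat \<Rightarrow> nat \<Rightarrow> (nat \<Rightarrow> nat \<Rightarrow> real) \<Rightarrow>
    (real \<Rightarrow> nat \<Rightarrow> nat \<Rightarrow> real) \<Rightarrow> (real \<Rightarrow> nat \<Rightarrow> nat \<Rightarrow> real) \<Rightarrow>
    (real \<Rightarrow> nat \<Rightarrow> nat \<Rightarrow> real) \<Rightarrow> (real \<Rightarrow> real \<Rightarrow> nat \<Rightarrow> nat \<Rightarrow> real) \<Rightarrow>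
    (real \<Rightarrow> real \<Rightarrow> nat \<Rightarrow> nat \<Rightarrow> real) \<Rightarrow> rl2 \<Rightarrow> rl2" where
  "PI4 a b m1 n1 P Q1 Q2 R0 R1 R2 u =
     (\<lambda>i. (\<Sum>j<m1. P i j * fst u j)
          + integral\<^sup>L (lebesgue_on {a..b}) (\<lambda>\<theta>. \<Sum>j<n1. Q1 \<theta> i j * snd u \<theta> j),
      \<lambda>s i. (\<Sum>j<m1. Q2 s i j * fst u j) + (\<Sum>j<n1. R0 s i j * snd u s j)
          + integral\<^sup>L (lebesgue_on {a..s}) (\<lambda>\<theta>. \<Sum>j<n1. R1 s \<theta> i j * snd u \<theta> j)
          + integral\<^sup>L (lebesgue_on {s..b}) (\<lambda>\<theta>. \<Sum>j<n1. R2 s \<theta> i j * snd u \<theta> j))"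

definition is_4PI :: "real \<Rightarrow> real \<Rightarrow> nat \<Rightarrow> nat \<Rightarrow> nat \<Rightarrow> nat \<Rightarrow> (rl2 \<Rightarrow> rl2) \<Rightarrow> bool" where
  "is_4PI a b m1 n1 m2 n2 Op \<longleftrightarrow>
     (\<exists>P Q1 Q2 R0 R1 R2. PI_params m1 n1 m2 n2 Q1 Q2 R0 R1 R2 \<and>
        (\<forall>u. in_RL2 a b m1 n1 u \<longrightarrow> Op u = PI4 a b m1 n1 P Q1 Q2 R0 R1 R2 u))"

definition is_adjoint :: "real \<Rightarrow> real \<Rightarrow> nat \<Rightarrow> nat \<Rightarrow> nat \<Rightarrow> nat \<Rightarrow>
    (rl2 \<Rightarrow> rl2) \<Rightarrow> (rl2 \<Rightarrow> rl2) \<Rightarrow> bool" where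
  "is_adjoint a b m1 n1 m2 n2 Op Ps \<longleftrightarrow>
     (\<forall>y. in_RL2 a b m2 n2 y \<longrightarrow> in_RL2 a b m1 n1 (Ps y)) \<and>
     (\<forall>x y. in_RL2 a b m1 n1 x \<longrightarrow> in_RL2 a b m2 n2 y \<longrightarrow>
        rl_ip a b m2 n2 (Op x) y = rl_ip a b m1 n1 x (Ps y))"

text \<open>Derivative (in the RL2 norm) of a trajectory X : [0,oo) -> RL2^{m,n} at t >= 0
  (one-sided at t = 0).\<close>
definition has_rl_deriv :: "real \<Rightarrow> real \<Rightarrow> nat \<Rightarrow> nat \<Rightarrow> (real \<Rightarrow> rl2) \<Rightarrow> (real \<Rightarrow> rl2) \<Rightarrow> real \<Rightarrow> bool" where
  "has_rl_deriv a b m n X X' t \<longleftrightarrow>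
     ((\<lambda>h. rl_norm a b m n (rl_diff (rl_scale (1 / h) (rl_diff (X (t + h)) (X t))) (X' t)))
        \<longlongrightarrow> 0) (at 0 within {-t..})"

definition rl_C1 :: "real \<Rightarrow> real \<Rightarrow> nat \<Rightarrow> nat \<Rightarrow> (real \<Rightarrow> rl2) \<Rightarrow> bool" where
  "rl_C1 a b m n X \<longleftrightarrow> (\<exists>X'. \<forall>t\<ge>0. in_RL2 a b m n (X' t) \<and> has_rl_deriv a b m n X X' t \<and>
      ((\<lambda>s. rl_norm a b m n (rl_diff (X' s) (X' t))) \<longlongrightarrow> 0) (at t within {0..}))"

text \<open>Solution of the auxiliary PIE d/dt (T x(t)) = A x(t), T x(0) = B v.\<close>
definition aux_sol :: "real \<Rightarrow> real \<Rightarrow> nat \<Rightarrow> nat \<Rightarrow> (rl2 \<Rightarrow> rl2) \<Rightarrow> (rl2 \<Rightarrow> rl2) \<Rightarrow>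
    (rl2 \<Rightarrow> rl2) \<Rightarrow> rl2 \<Rightarrow> (real \<Rightarrow> rl2) \<Rightarrow> bool" where
  "aux_sol a b m n T A B v X \<longleftrightarrow>
     (\<forall>t\<ge>0. in_RL2 a b m n (X t)) \<and> rl_C1 a b m n X \<and>
     (\<forall>t\<ge>0. has_rl_deriv a b m n (\<lambda>t. T (X t)) (\<lambda>t. A (X t)) t) \<and>
     rl_norm a b m n (rl_diff (T (X 0)) (B v)) = 0"

definition well_posed :: "real \<Rightarrow> real \<Rightarrow> nat \<Rightarrow> nat \<Rightarrow> nat \<Rightarrow> (rl2 \<Rightarrow> rl2) \<Rightarrow>
    (rl2 \<Rightarrow> rl2) \<Rightarrow> (rl2 \<Rightarrow> rl2) \<Rightarrow> bool" where
  "well_posed a b m n nw T A B \<longleftrightarrow>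
     (\<forall>v. in_RL2 a b nw 0 v \<longrightarrow>
        (\<exists>X. aux_sol a b m n T A B v X) \<and>
        (\<forall>X Y. aux_sol a b m n T A B v X \<longrightarrow> aux_sol a b m n T A B v Y \<longrightarrow>
           (\<forall>t\<ge>0. rl_norm a b m n (rl_diff (X t) (Y t)) = 0)))"

definition ip_norm :: "real \<Rightarrow> real \<Rightarrow> nat \<Rightarrow> nat \<Rightarrow> nat \<Rightarrow> nat \<Rightarrow> (rl2 \<Rightarrow> rl2) \<Rightarrow>
    (rl2 \<Rightarrow> rl2) \<Rightarrow> (rl2 \<Rightarrow> rl2) \<Rightarrow> (rl2 \<Rightarrow> rl2) \<Rightarrow> ennreal" where
  "ip_norm a b m n nw nz T A B C =
     Sup {ennreal (rl_norm a b nz 0 (C (X t))) | v X t.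
            in_RL2 a b nw 0 v \<and> rl_norm a b nw 0 v = 1 \<and>
            aux_sol a b m n T A B v X \<and> t \<ge> 0}"

end

theory Submission
  imports Defs
begin

text \<open>
  Let \<open>X\<close> solve the auxiliary PIE with data \<open>v\<close> and \<open>Y\<close> the dual one with data \<open>v\<^sub>d\<close>,
  and fix \<open>t \<ge> 0\<close>. The pairing \<open>\<phi>(s) = \<langle>X(s), T\<^sup>* Y(t - s)\<rangle>\<close> has derivative
  \<open>\<langle>A X(s), Y(t - s)\<rangle> - \<langle>X(s), A\<^sup>* Y(t - s)\<rangle> = 0\<close> on \<open>[0, t]\<close>, so \<open>\<phi>(0) = \<phi>(t)\<close>; by the
  initial conditions \<open>T X(0) = B v\<close> and \<open>T\<^sup>* Y(0) = C\<^sup>* v\<^sub>d\<close> this says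
  \<open>\<langle>C X(t), v\<^sub>d\<rangle> = \<langle>v, B\<^sup>* Y(t)\<rangle>\<close>. Choosing \<open>v\<^sub>d = C X(t) / \<parallel>C X(t)\<parallel>\<close> and applying
  Cauchy-Schwarz gives \<open>\<parallel>C X(t)\<parallel> \<le> \<parallel>B\<^sup>* Y(t)\<parallel>\<close>, so each impulse-to-peak norm bounds the
  other.
\<close>

section \<open>Square-integrable functions and the space \<open>RL\<^sub>2\<close>\<close>

definition square_integrable :: "real \<Rightarrow> real \<Rightarrow> (real \<Rightarrow> real) \<Rightarrow> bool" where
  "square_integrable a b g \<longleftrightarrow>
     g \<in> borel_measurable (lebesgue_on {a..b}) \<and> integrable (lebesgue_on {a..b}) (\<lambda>s. (g s)\<^sup>2)"

lemma in_RL2_iff_square_integrable: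
  "in_RL2 a b m n u \<longleftrightarrow> (\<forall>j<n. square_integrable a b (\<lambda>s. snd u s j))"
  by (simp add: in_RL2_def square_integrable_def)

lemma in_RL2_finite_dim [simp]: "in_RL2 a b k 0 u"
  by (simp add: in_RL2_def)

lemma square_integrable_dominated:
  assumes f: "f \<in> borel_measurable (lebesgue_on {a..b})"
    and h: "integrable (lebesgue_on {a..b}) h"
    and bound: "\<And>s. s \<in> {a..b} \<Longrightarrow> (f s)\<^sup>2 \<le> h s"
  shows "square_integrable a b f"
  unfolding square_integrable_def
proof
  show "integrable (lebesgue_on {a..b}) (\<lambda>s. (f s)\<^sup>2)"
    using f bound by (intro Bochner_Integration.integrable_bound[OF h] AE_I2)
      (auto intro: order_trans[OF _ abs_ge_self])
qed (fact f)

lemma integrable_mult_square_integrable: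
  assumes f: "square_integrable a b f" and g: "square_integrable a b g"
  shows "integrable (lebesgue_on {a..b}) (\<lambda>s. f s * g s)"
proof (rule Bochner_Integration.integrable_bound[where f="\<lambda>s. (f s)\<^sup>2 + (g s)\<^sup>2"])
  have "\<bar>f s * g s\<bar> \<le> (f s)\<^sup>2 + (g s)\<^sup>2" for s
    using sum_squares_bound[of "\<bar>f s\<bar>" "\<bar>g s\<bar>"] abs_ge_zero[of "f s * g s"]
      abs_mult[of "f s" "g s"] by simp
  then show "AE s in lebesgue_on {a..b}. norm (f s * g s) \<le> norm ((f s)\<^sup>2 + (g s)\<^sup>2)"
    by (intro AE_I2) simp
qed (use f g in \<open>auto simp: square_integrable_def\<close>)

lemma square_integrable_add:
  assumes f: "square_integrable a b f" and g: "square_integrable a b g"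
  shows "square_integrable a b (\<lambda>s. f s + g s)"
proof (rule square_integrable_dominated)
  show "(\<lambda>s. f s + g s) \<in> borel_measurable (lebesgue_on {a..b})"
    using f g by (simp add: square_integrable_def borel_measurable_add)
  show "integrable (lebesgue_on {a..b}) (\<lambda>s. 2 * (f s)\<^sup>2 + 2 * (g s)\<^sup>2)"
    using f g by (simp add: square_integrable_def)
  show "(f s + g s)\<^sup>2 \<le> 2 * (f s)\<^sup>2 + 2 * (g s)\<^sup>2" for s
    using sum_squares_bound[of "f s" "g s"] by (simp add: power2_sum)
qed

lemma square_integrable_cmult:
  "square_integrable a b f \<Longrightarrow> square_integrable a b (\<lambda>s. c * f s)"
  by (simp add: square_integrable_def power_mult_distrib borel_measurable_times)

lemma square_integrable_sum:
  fixes N :: nat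
  assumes "\<And>j. j < N \<Longrightarrow> square_integrable a b (f j)"
  shows "square_integrable a b (\<lambda>s. \<Sum>j<N. f j s)"
  using assms
proof (induction N)
  case 0
  then show ?case by (simp add: square_integrable_def)
next
  case (Suc N)
  then show ?case by (simp add: square_integrable_add)
qed

lemma square_integrable_continuous:
  assumes "continuous_on {a..b} g"
  shows "square_integrable a b g"
  unfolding square_integrable_def
proof
  show "g \<in> borel_measurable (lebesgue_on {a..b})"
    by (rule continuous_imp_measurable_on_sets_lebesgue[OF assms]) simp
  show "integrable (lebesgue_on {a..b}) (\<lambda>s. (g s)\<^sup>2)"
    by (rule continuous_imp_integrable_real) (intro continuous_intros assms)
qed

lemma square_integrable_mult_continuous:
  assumes p: "continuous_on {a..b} p" and f: "square_integrable a b f"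
  shows "square_integrable a b (\<lambda>s. p s * f s)"
proof -
  obtain M where M: "\<And>s. s \<in> {a..b} \<Longrightarrow> \<bar>p s\<bar> \<le> M"
    using compact_imp_bounded[OF compact_continuous_image[OF p compact_Icc]]
    by (force simp: bounded_iff)
  show ?thesis
  proof (rule square_integrable_dominated)
    show "(\<lambda>s. p s * f s) \<in> borel_measurable (lebesgue_on {a..b})"
      using f continuous_imp_measurable_on_sets_lebesgue[OF p]
      unfolding square_integrable_def by (intro borel_measurable_times) auto
    show "integrable (lebesgue_on {a..b}) (\<lambda>s. M\<^sup>2 * (f s)\<^sup>2)"
      using f by (simp add: square_integrable_def)
    show "(p s * f s)\<^sup>2 \<le> M\<^sup>2 * (f s)\<^sup>2" if "s \<in> {a..b}" for s
    proof -
      have "(p s)\<^sup>2 \<le> M\<^sup>2"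
        using M[OF that] abs_le_square_iff[of "p s" M] by linarith
      then show ?thesis
        unfolding power_mult_distrib by (rule mult_right_mono) simp
    qed
  qed
qed

lemma in_RL2_diff: "in_RL2 a b m n u \<Longrightarrow> in_RL2 a b m n v \<Longrightarrow> in_RL2 a b m n (rl_diff u v)"
  unfolding in_RL2_iff_square_integrable rl_diff_def
  using square_integrable_add square_integrable_cmult[where c="-1"] by fastforce

lemma in_RL2_scale: "in_RL2 a b m n u \<Longrightarrow> in_RL2 a b m n (rl_scale c u)"
  unfolding in_RL2_iff_square_integrable rl_scale_def using square_integrable_cmult by fastforce

section \<open>4-PI operators map \<open>RL\<^sub>2\<close> into itself\<close>

lemma poly_fun_continuous_on: "poly_fun g \<Longrightarrow> continuous_on S g"
  unfolding poly_fun_def by (metis continuous_on_cong continuous_on_poly continuous_on_id)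

lemma continuous_on_integral_upper_limit:
  assumes g: "integrable (lebesgue_on {a..b}) (g :: real \<Rightarrow> real)"
  shows "continuous_on {a..b} (\<lambda>s. integral\<^sup>L (lebesgue_on {a..s}) g)"
proof (rule continuous_on_eq[OF indefinite_integral_continuous_1])
  show "g integrable_on {a..b}" using g by (simp add: integrable_on_lebesgue_on)
  fix s assume "s \<in> {a..b}"
  then have "integrable (lebesgue_on {a..s}) g" by (intro integrable_subinterval[OF g]) auto
  then show "integral {a..s} g = integral\<^sup>L (lebesgue_on {a..s}) g"
    by (simp add: lebesgue_integral_eq_integral)
qed

lemma continuous_on_integral_lower_limit:
  assumes g: "integrable (lebesgue_on {a..b}) (g :: real \<Rightarrow> real)"
  shows "continuous_on {a..b} (\<lambda>s. integral\<^sup>L (lebesgue_on {s..b}) g)"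
proof (rule continuous_on_eq[OF indefinite_integral_continuous_1'])
  show "g integrable_on {a..b}" using g by (simp add: integrable_on_lebesgue_on)
  fix s assume "s \<in> {a..b}"
  then have "integrable (lebesgue_on {s..b}) g" by (intro integrable_subinterval[OF g]) auto
  then show "integral {s..b} g = integral\<^sup>L (lebesgue_on {s..b}) g"
    by (simp add: lebesgue_integral_eq_integral)
qed

lemma bipoly_fun_continuous_on: "bipoly_fun K \<Longrightarrow> continuous_on S (K s)"
  unfolding bipoly_fun_def by (force intro!: continuous_intros)

lemma integrable_bipoly_kernel:
  "bipoly_fun K \<Longrightarrow> square_integrable a b f \<Longrightarrow> integrable (lebesgue_on {a..b}) (\<lambda>\<theta>. K s \<theta> * f \<theta>)"
  by (rule integrable_mult_square_integrable[OF square_integrable_continuous[OF bipoly_fun_continuous_on]])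

lemma continuous_on_bipoly_kernel_integral:
  assumes K: "bipoly_fun K" and f: "square_integrable a b f"
    and J_int: "\<And>(g :: real \<Rightarrow> real) s. integrable (lebesgue_on {a..b}) g \<Longrightarrow> s \<in> {a..b} \<Longrightarrow>
      integrable (lebesgue_on (J s)) g"
    and J_cont: "\<And>g :: real \<Rightarrow> real. integrable (lebesgue_on {a..b}) g \<Longrightarrow>
      continuous_on {a..b} (\<lambda>s. integral\<^sup>L (lebesgue_on (J s)) g)"
  shows "continuous_on {a..b} (\<lambda>s. integral\<^sup>L (lebesgue_on (J s)) (\<lambda>\<theta>. K s \<theta> * f \<theta>))"
proof -
  obtain N c where K_eq: "\<And>s \<theta>. K s \<theta> = (\<Sum>i\<le>N. \<Sum>k\<le>N. c i k * s ^ i * \<theta> ^ k)"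
    using K by (auto simp: bipoly_fun_def)
  have moment: "integrable (lebesgue_on {a..b}) (\<lambda>\<theta>. \<theta> ^ k * f \<theta>)" for k
    by (rule integrable_mult_square_integrable[OF square_integrable_continuous f]) (intro continuous_intros)
  have expand: "integral\<^sup>L (lebesgue_on (J s)) (\<lambda>\<theta>. K s \<theta> * f \<theta>) =
      (\<Sum>i\<le>N. \<Sum>k\<le>N. c i k * s ^ i * integral\<^sup>L (lebesgue_on (J s)) (\<lambda>\<theta>. \<theta> ^ k * f \<theta>))"
    if "s \<in> {a..b}" for s
  proof -
    have "(\<lambda>\<theta>. K s \<theta> * f \<theta>) = (\<lambda>\<theta>. \<Sum>i\<le>N. \<Sum>k\<le>N. c i k * s ^ i * (\<theta> ^ k * f \<theta>))"
      by (simp add: K_eq sum_distrib_right mult.assoc)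
    then show ?thesis
      using J_int[OF moment that]
      by (simp add: Bochner_Integration.integral_sum Bochner_Integration.integrable_sum)
  qed
  have "continuous_on {a..b} (\<lambda>s. \<Sum>i\<le>N. \<Sum>k\<le>N.
      c i k * s ^ i * integral\<^sup>L (lebesgue_on (J s)) (\<lambda>\<theta>. \<theta> ^ k * f \<theta>))"
    by (intro continuous_intros J_cont moment)
  then show ?thesis by (rule continuous_on_eq) (simp add: expand)
qed

lemma continuous_on_bipoly_kernels_integral:
  fixes N :: nat
  assumes K: "\<And>j. j < N \<Longrightarrow> bipoly_fun (K j)" and f: "\<And>j. j < N \<Longrightarrow> square_integrable a b (f j)"
    and J_int: "\<And>(g :: real \<Rightarrow> real) s. integrable (lebesgue_on {a..b}) g \<Longrightarrow> s \<in> {a..b} \<Longrightarrow>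
      integrable (lebesgue_on (J s)) g"
    and J_cont: "\<And>g :: real \<Rightarrow> real. integrable (lebesgue_on {a..b}) g \<Longrightarrow>
      continuous_on {a..b} (\<lambda>s. integral\<^sup>L (lebesgue_on (J s)) g)"
  shows "continuous_on {a..b} (\<lambda>s. integral\<^sup>L (lebesgue_on (J s)) (\<lambda>\<theta>. \<Sum>j<N. K j s \<theta> * f j \<theta>))"
proof -
  have cont: "continuous_on {a..b} (\<lambda>s. \<Sum>j<N. integral\<^sup>L (lebesgue_on (J s)) (\<lambda>\<theta>. K j s \<theta> * f j \<theta>))"
    using continuous_on_bipoly_kernel_integral[OF K f J_int J_cont] by (intro continuous_on_sum) auto
  have split: "integral\<^sup>L (lebesgue_on (J s)) (\<lambda>\<theta>. \<Sum>j<N. K j s \<theta> * f j \<theta>) =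
      (\<Sum>j<N. integral\<^sup>L (lebesgue_on (J s)) (\<lambda>\<theta>. K j s \<theta> * f j \<theta>))" if "s \<in> {a..b}" for s
  proof -
    have "\<And>j. j < N \<Longrightarrow> integrable (lebesgue_on (J s)) (\<lambda>\<theta>. K j s \<theta> * f j \<theta>)"
      using that by (intro J_int integrable_bipoly_kernel K f)
    then show ?thesis by (simp add: Bochner_Integration.integral_sum)
  qed
  from cont show ?thesis by (rule continuous_on_eq) (simp add: split)
qed

lemma PI4_in_RL2:
  assumes params: "PI_params m1 n1 m2 n2 Q1 Q2 R0 R1 R2" and u: "in_RL2 a b m1 n1 u"
  shows "in_RL2 a b m2 n2 (PI4 a b m1 n1 P Q1 Q2 R0 R1 R2 u)"
  unfolding in_RL2_iff_square_integrable
proof (intro allI impI)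
  fix i assume i: "i < n2"
  have f: "\<And>j. j < n1 \<Longrightarrow> square_integrable a b (\<lambda>s. snd u s j)"
    using u by (simp add: in_RL2_iff_square_integrable)
  have "square_integrable a b (\<lambda>s. \<Sum>j<m1. Q2 s i j * fst u j)"
    using params i by (intro square_integrable_continuous continuous_intros poly_fun_continuous_on)
      (auto simp: PI_params_def)
  moreover have "square_integrable a b (\<lambda>s. \<Sum>j<n1. R0 s i j * snd u s j)"
    using params i f
    by (intro square_integrable_sum square_integrable_mult_continuous poly_fun_continuous_on)
      (auto simp: PI_params_def)
  moreover have "square_integrable a b
      (\<lambda>s. integral\<^sup>L (lebesgue_on {a..s}) (\<lambda>\<theta>. \<Sum>j<n1. R1 s \<theta> i j * snd u \<theta> j))"
    by (rule square_integrable_continuous,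
        rule continuous_on_bipoly_kernels_integral[where J="\<lambda>s. {a..s}"])
      (use params i f in \<open>auto simp: PI_params_def
        intro: integrable_subinterval continuous_on_integral_upper_limit\<close>)
  moreover have "square_integrable a b
      (\<lambda>s. integral\<^sup>L (lebesgue_on {s..b}) (\<lambda>\<theta>. \<Sum>j<n1. R2 s \<theta> i j * snd u \<theta> j))"
    by (rule square_integrable_continuous,
        rule continuous_on_bipoly_kernels_integral[where J="\<lambda>s. {s..b}"])
      (use params i f in \<open>auto simp: PI_params_def
        intro: integrable_subinterval continuous_on_integral_lower_limit\<close>)
  ultimately show "square_integrable a b (\<lambda>s. snd (PI4 a b m1 n1 P Q1 Q2 R0 R1 R2 u) s i)"
    unfolding PI4_def snd_conv by (intro square_integrable_add)
qed

lemma is_4PI_in_RL2: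
  "is_4PI a b m1 n1 m2 n2 Op \<Longrightarrow> in_RL2 a b m1 n1 u \<Longrightarrow> in_RL2 a b m2 n2 (Op u)"
  unfolding is_4PI_def using PI4_in_RL2 by metis

section \<open>The inner product of \<open>RL\<^sub>2\<close>\<close>

lemma integrable_rl_ip_integrand:
  assumes "in_RL2 a b m n u" "in_RL2 a b m n v"
  shows "integrable (lebesgue_on {a..b}) (\<lambda>s. \<Sum>j<n. snd u s j * snd v s j)"
  using assms unfolding in_RL2_iff_square_integrable
  by (intro Bochner_Integration.integrable_sum integrable_mult_square_integrable) auto

lemma rl_ip_commute: "rl_ip a b m n u v = rl_ip a b m n v u"
  unfolding rl_ip_def by (simp add: mult.commute)

lemma rl_ip_self_nonneg: "0 \<le> rl_ip a b m n u u"
  unfolding rl_ip_def by (intro add_nonneg_nonneg sum_nonneg integral_nonneg_AE AE_I2) auto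

lemma rl_ip_diff_left:
  assumes "in_RL2 a b m n u" "in_RL2 a b m n v" "in_RL2 a b m n w"
  shows "rl_ip a b m n (rl_diff u v) w = rl_ip a b m n u w - rl_ip a b m n v w"
  using integrable_rl_ip_integrand[OF assms(1,3)] integrable_rl_ip_integrand[OF assms(2,3)]
  by (simp add: rl_ip_def rl_diff_def sum_subtractf left_diff_distrib)

lemma rl_ip_diff_right:
  assumes "in_RL2 a b m n u" "in_RL2 a b m n v" "in_RL2 a b m n w"
  shows "rl_ip a b m n w (rl_diff u v) = rl_ip a b m n w u - rl_ip a b m n w v"
  using rl_ip_diff_left[OF assms] rl_ip_commute by metis

lemma rl_ip_scale_left: "rl_ip a b m n (rl_scale c u) w = c * rl_ip a b m n u w"
  unfolding rl_ip_def rl_scale_def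
  by (simp add: sum_distrib_left[symmetric] mult.assoc distrib_left)

lemma rl_ip_scale_right: "rl_ip a b m n w (rl_scale c u) = c * rl_ip a b m n w u"
  using rl_ip_scale_left rl_ip_commute by metis

lemma quadratic_nonneg_imp_discriminant_le:
  fixes p q r :: real
  assumes nonneg: "\<And>l. 0 \<le> p - 2 * l * q + l\<^sup>2 * r" and "0 \<le> p" "0 \<le> r"
  shows "q\<^sup>2 \<le> p * r"
proof (cases "r = 0")
  case True
  have "q = 0"
  proof (rule ccontr)
    assume "q \<noteq> 0"
    have "0 \<le> p - 2 * ((p + 1) / (2 * q)) * q + ((p + 1) / (2 * q))\<^sup>2 * r" by (rule nonneg)
    also have "\<dots> = -1" using True \<open>q \<noteq> 0\<close> by (simp add: field_simps)
    finally show False by simp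
  qed
  then show ?thesis using assms by simp
next
  case False
  then have "r > 0" using assms by simp
  have "0 \<le> p - 2 * (q / r) * q + (q / r)\<^sup>2 * r" by (rule nonneg)
  also have "\<dots> = p - q\<^sup>2 / r" using \<open>r > 0\<close> by (simp add: field_simps power2_eq_square)
  finally show ?thesis using \<open>r > 0\<close> by (simp add: divide_le_eq mult.commute)
qed

lemma rl_norm_nonneg: "0 \<le> rl_norm a b m n u"
  by (simp add: rl_norm_def rl_ip_self_nonneg)

lemma rl_norm_power2: "(rl_norm a b m n u)\<^sup>2 = rl_ip a b m n u u"
  by (simp add: rl_norm_def rl_ip_self_nonneg)

lemma rl_norm_scale: "rl_norm a b m n (rl_scale c u) = \<bar>c\<bar> * rl_norm a b m n u"
  by (simp add: rl_norm_def rl_ip_scale_left rl_ip_scale_right real_sqrt_mult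
      mult.assoc[symmetric] flip: power2_eq_square)

lemma rl_ip_Cauchy_Schwarz:
  assumes u: "in_RL2 a b m n u" and v: "in_RL2 a b m n v"
  shows "\<bar>rl_ip a b m n u v\<bar> \<le> rl_norm a b m n u * rl_norm a b m n v"
proof -
  let ?ip = "rl_ip a b m n"
  have "(?ip u v)\<^sup>2 \<le> ?ip u u * ?ip v v"
  proof (rule quadratic_nonneg_imp_discriminant_le)
    fix l
    have lv: "in_RL2 a b m n (rl_scale l v)" using v by (rule in_RL2_scale)
    have "0 \<le> ?ip (rl_diff u (rl_scale l v)) (rl_diff u (rl_scale l v))" by (rule rl_ip_self_nonneg)
    also have "\<dots> = ?ip u u - 2 * l * ?ip u v + l\<^sup>2 * ?ip v v"
      using u v lv in_RL2_diff[OF u lv]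
      by (simp add: rl_ip_diff_left rl_ip_diff_right rl_ip_scale_left rl_ip_scale_right
          rl_ip_commute[of a b m n v u] power2_eq_square algebra_simps)
    finally show "0 \<le> ?ip u u - 2 * l * ?ip u v + l\<^sup>2 * ?ip v v" .
  qed (auto intro: rl_ip_self_nonneg)
  then have "sqrt ((?ip u v)\<^sup>2) \<le> sqrt (?ip u u * ?ip v v)" by (rule real_sqrt_le_mono)
  then show ?thesis by (simp add: rl_norm_def real_sqrt_mult)
qed

lemma rl_ip_left_eq_if_null_diff:
  assumes u: "in_RL2 a b m n u" and v: "in_RL2 a b m n v" and w: "in_RL2 a b m n w"
    and null: "rl_norm a b m n (rl_diff u v) = 0"
  shows "rl_ip a b m n u w = rl_ip a b m n v w"
  using rl_ip_Cauchy_Schwarz[OF in_RL2_diff[OF u v] w] null rl_ip_diff_left[OF u v w] by simp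

lemma rl_norm_diff_self [simp]: "rl_norm a b m n (rl_diff u u) = 0"
  by (simp add: rl_norm_def rl_ip_def rl_diff_def)

section \<open>Convergence and differentiation in \<open>RL\<^sub>2\<close>\<close>

definition rl_tendsto :: "real \<Rightarrow> real \<Rightarrow> nat \<Rightarrow> nat \<Rightarrow> ('a \<Rightarrow> rl2) \<Rightarrow> rl2 \<Rightarrow> 'a filter \<Rightarrow> bool" where
  "rl_tendsto a b m n Q L F \<longleftrightarrow> ((\<lambda>h. rl_norm a b m n (rl_diff (Q h) L)) \<longlongrightarrow> 0) F"

lemma rl_tendsto_const: "rl_tendsto a b m n (\<lambda>_. w) w F"
  by (simp add: rl_tendsto_def)

lemma tendsto_rl_ip:
  assumes ev: "eventually (\<lambda>h. in_RL2 a b m n (Q h) \<and> in_RL2 a b m n (R h)) F"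
    and L: "in_RL2 a b m n L" and M: "in_RL2 a b m n M"
    and Q: "rl_tendsto a b m n Q L F" and R: "rl_tendsto a b m n R M F"
  shows "((\<lambda>h. rl_ip a b m n (Q h) (R h)) \<longlongrightarrow> rl_ip a b m n L M) F"
proof -
  let ?ip = "rl_ip a b m n" and ?nm = "rl_norm a b m n"
  let ?dQ = "\<lambda>h. rl_diff (Q h) L" and ?dR = "\<lambda>h. rl_diff (R h) M"
  have "((\<lambda>h. ?ip (Q h) (R h) - ?ip L M) \<longlongrightarrow> 0) F"
  proof (rule Lim_null_comparison)
    show "eventually (\<lambda>h. norm (?ip (Q h) (R h) - ?ip L M)
        \<le> ?nm (?dQ h) * ?nm (?dR h) + ?nm (?dQ h) * ?nm M + ?nm L * ?nm (?dR h)) F"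
      using ev
    proof eventually_elim
      case (elim h)
      then have Qh: "in_RL2 a b m n (Q h)" and Rh: "in_RL2 a b m n (R h)" by auto
      have dQ: "in_RL2 a b m n (?dQ h)" and dR: "in_RL2 a b m n (?dR h)"
        using Qh Rh L M by (auto intro: in_RL2_diff)
      have "?ip (Q h) (R h) - ?ip L M = ?ip (?dQ h) (?dR h) + ?ip (?dQ h) M + ?ip L (?dR h)"
        using Qh Rh L M dQ
        by (simp add: rl_ip_diff_left rl_ip_diff_right)
      also have "\<bar>\<dots>\<bar> \<le> ?nm (?dQ h) * ?nm (?dR h) + ?nm (?dQ h) * ?nm M + ?nm L * ?nm (?dR h)"
        using rl_ip_Cauchy_Schwarz[OF dQ dR] rl_ip_Cauchy_Schwarz[OF dQ M]
          rl_ip_Cauchy_Schwarz[OF L dR] by linarith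
      finally show ?case by simp
    qed
    have "((\<lambda>h. ?nm (?dQ h) * ?nm (?dR h) + ?nm (?dQ h) * ?nm M + ?nm L * ?nm (?dR h))
        \<longlongrightarrow> 0 * 0 + 0 * ?nm M + ?nm L * 0) F"
      using Q R unfolding rl_tendsto_def by (intro tendsto_intros)
    then show "((\<lambda>h. ?nm (?dQ h) * ?nm (?dR h) + ?nm (?dQ h) * ?nm M + ?nm L * ?nm (?dR h))
        \<longlongrightarrow> 0) F" by simp
  qed
  then show ?thesis by (rule LIM_zero_cancel)
qed

lemma rl_ip_difference_quotient:
  assumes "h \<noteq> 0"
    and x: "in_RL2 a b m n x" and x0: "in_RL2 a b m n x0"
    and z: "in_RL2 a b m n z" and z0: "in_RL2 a b m n z0"
  defines "qx \<equiv> rl_scale (1 / h) (rl_diff x x0)" and "qz \<equiv> rl_scale (1 / h) (rl_diff z z0)"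
  shows "(rl_ip a b m n x z - rl_ip a b m n x0 z0) / h =
    rl_ip a b m n qx z0 + rl_ip a b m n x0 qz + h * rl_ip a b m n qx qz"
  using assms
  by (simp add: rl_ip_scale_left rl_ip_scale_right rl_ip_diff_left rl_ip_diff_right
      in_RL2_diff in_RL2_scale field_simps power2_eq_square)

text \<open>
  Unlike \<^const>\<open>has_rl_deriv\<close>, which works with the increment \<open>h\<close> at \<open>0\<close>, this form is
  relative to an arbitrary set of times and so survives restriction and time reversal.
\<close>

definition rl_has_derivative_within ::
    "real \<Rightarrow> real \<Rightarrow> nat \<Rightarrow> nat \<Rightarrow> (real \<Rightarrow> rl2) \<Rightarrow> rl2 \<Rightarrow> real \<Rightarrow> real set \<Rightarrow> bool" where
  "rl_has_derivative_within a b m n X X' s S \<longleftrightarrow>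
     rl_tendsto a b m n (\<lambda>y. rl_scale (1 / (y - s)) (rl_diff (X y) (X s))) X' (at s within S)"

lemma rl_has_derivative_within_subset:
  "rl_has_derivative_within a b m n X X' s S \<Longrightarrow> S' \<subseteq> S \<Longrightarrow>
    rl_has_derivative_within a b m n X X' s S'"
  unfolding rl_has_derivative_within_def rl_tendsto_def by (rule tendsto_within_subset)

lemma has_rl_deriv_imp_rl_has_derivative_within:
  assumes "has_rl_deriv a b m n X X' s"
  shows "rl_has_derivative_within a b m n X (X' s) s {0..}"
proof -
  have "filterlim (\<lambda>y. y - s) (at 0 within {-s..}) (at s within {0..})"
    unfolding filterlim_at
  proof
    show "eventually (\<lambda>y. y - s \<in> {-s..} \<and> y - s \<noteq> 0) (at s within {0..})"
      by (auto simp: eventually_at_filter)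
    show "((\<lambda>y. y - s) \<longlongrightarrow> 0) (at s within {0..})"
      using tendsto_diff[OF tendsto_ident_at[of s "{0..}"] tendsto_const[of s]] by simp
  qed
  from filterlim_compose[OF assms[unfolded has_rl_deriv_def] this] show ?thesis
    by (simp add: rl_has_derivative_within_def rl_tendsto_def)
qed

lemma rl_has_derivative_within_reflect:
  assumes "rl_has_derivative_within a b m n W W' u {0..}"
  shows "rl_has_derivative_within a b m n (\<lambda>y. W (t - y)) (rl_scale (-1) W') (t - u) {..t}"
proof -
  have "filterlim (\<lambda>y. t - y) (at u within {0..}) (at (t - u) within {..t})"
    unfolding filterlim_at
  proof
    show "eventually (\<lambda>y. t - y \<in> {0..} \<and> t - y \<noteq> u) (at (t - u) within {..t})"
      by (auto simp: eventually_at_filter)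
    show "((\<lambda>y. t - y) \<longlongrightarrow> u) (at (t - u) within {..t})"
      using tendsto_diff[OF tendsto_const[of t] tendsto_ident_at[of "t - u"]] by simp
  qed
  from filterlim_compose[OF assms[unfolded rl_has_derivative_within_def rl_tendsto_def] this]
  have "((\<lambda>y. rl_norm a b m n
      (rl_diff (rl_scale (1 / (t - y - u)) (rl_diff (W (t - y)) (W u))) W')) \<longlongrightarrow> 0)
      (at (t - u) within {..t})" .
  moreover have "rl_diff (rl_scale (1 / (y - (t - u))) d) (rl_scale (-1) W') =
      rl_scale (-1) (rl_diff (rl_scale (1 / (t - y - u)) d) W')" for y d
  proof -
    have "1 / (y - (t - u)) = - (1 / (t - y - u))"
      by (simp add: minus_divide_right)
    then show ?thesis by (simp add: rl_diff_def rl_scale_def fun_eq_iff)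
  qed
  ultimately show ?thesis
    by (simp add: rl_has_derivative_within_def rl_tendsto_def rl_norm_scale)
qed

lemma eventually_at_within_neq_mem: "eventually (\<lambda>y. y \<noteq> s \<and> y \<in> S) (at s within S)"
  by (simp add: eventually_at_filter)

lemma has_field_derivative_rl_ip:
  assumes ev: "eventually (\<lambda>y. in_RL2 a b m n (X y) \<and> in_RL2 a b m n (Z y)) (at s within S)"
    and Xs: "in_RL2 a b m n (X s)" and Zs: "in_RL2 a b m n (Z s)"
    and X': "in_RL2 a b m n X'" and Z': "in_RL2 a b m n Z'"
    and dX: "rl_has_derivative_within a b m n X X' s S"
    and dZ: "rl_has_derivative_within a b m n Z Z' s S"
  shows "((\<lambda>y. rl_ip a b m n (X y) (Z y)) has_field_derivative
           rl_ip a b m n X' (Z s) + rl_ip a b m n (X s) Z') (at s within S)"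
proof -
  let ?ip = "rl_ip a b m n"
  define qX where "qX = (\<lambda>y. rl_scale (1 / (y - s)) (rl_diff (X y) (X s)))"
  define qZ where "qZ = (\<lambda>y. rl_scale (1 / (y - s)) (rl_diff (Z y) (Z s)))"
  have ev_q: "eventually (\<lambda>y. in_RL2 a b m n (qX y) \<and> in_RL2 a b m n (qZ y)) (at s within S)"
    using ev by eventually_elim (simp add: qX_def qZ_def in_RL2_scale in_RL2_diff Xs Zs)
  have "eventually (\<lambda>y. (?ip (X y) (Z y) - ?ip (X s) (Z s)) / (y - s) =
      ?ip (qX y) (Z s) + ?ip (X s) (qZ y) + (y - s) * ?ip (qX y) (qZ y)) (at s within S)"
    using ev eventually_at_within_neq_mem[of s S]
    by eventually_elim (auto simp: qX_def qZ_def rl_ip_difference_quotient Xs Zs)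
  moreover have "((\<lambda>y. ?ip (qX y) (Z s) + ?ip (X s) (qZ y) + (y - s) * ?ip (qX y) (qZ y))
      \<longlongrightarrow> ?ip X' (Z s) + ?ip (X s) Z' + 0 * ?ip X' Z') (at s within S)"
  proof (intro tendsto_add tendsto_mult)
    have tX: "rl_tendsto a b m n qX X' (at s within S)"
      using dX by (simp add: rl_has_derivative_within_def qX_def)
    have tZ: "rl_tendsto a b m n qZ Z' (at s within S)"
      using dZ by (simp add: rl_has_derivative_within_def qZ_def)
    show "((\<lambda>y. ?ip (qX y) (Z s)) \<longlongrightarrow> ?ip X' (Z s)) (at s within S)"
      by (rule tendsto_rl_ip[OF eventually_mono[OF ev_q] X' Zs tX rl_tendsto_const]) (simp add: Zs)
    show "((\<lambda>y. ?ip (X s) (qZ y)) \<longlongrightarrow> ?ip (X s) Z') (at s within S)"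
      by (rule tendsto_rl_ip[OF eventually_mono[OF ev_q] Xs Z' rl_tendsto_const tZ]) (simp add: Xs)
    show "((\<lambda>y. ?ip (qX y) (qZ y)) \<longlongrightarrow> ?ip X' Z') (at s within S)"
      by (rule tendsto_rl_ip[OF ev_q X' Z' tX tZ])
    show "((\<lambda>y. y - s) \<longlongrightarrow> 0) (at s within S)"
      using tendsto_diff[OF tendsto_ident_at[of s S] tendsto_const[of s]] by simp
  qed
  ultimately show ?thesis
    unfolding has_field_derivative_iff by (simp add: tendsto_cong)
qed

lemma is_adjoint_in_RL2:
  "is_adjoint a b m1 n1 m2 n2 Op Ps \<Longrightarrow> in_RL2 a b m2 n2 y \<Longrightarrow> in_RL2 a b m1 n1 (Ps y)"
  unfolding is_adjoint_def by blast

lemma is_adjoint_rl_ip: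
  "is_adjoint a b m1 n1 m2 n2 Op Ps \<Longrightarrow> in_RL2 a b m1 n1 x \<Longrightarrow> in_RL2 a b m2 n2 y \<Longrightarrow>
    rl_ip a b m2 n2 (Op x) y = rl_ip a b m1 n1 x (Ps y)"
  unfolding is_adjoint_def by blast

lemma rl_ip_derivative_adjoint:
  assumes nontrivial: "at s within S \<noteq> bot"
    and T: "\<And>u. in_RL2 a b m n u \<Longrightarrow> in_RL2 a b m n (T u)"
    and adj: "is_adjoint a b m n m n T Ts"
    and ev: "eventually (\<lambda>y. in_RL2 a b m n (X y)) (at s within S)"
    and Xs: "in_RL2 a b m n (X s)" and X': "in_RL2 a b m n X'" and Y': "in_RL2 a b m n Y'"
    and w: "in_RL2 a b m n w"
    and dX: "rl_has_derivative_within a b m n X X' s S"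
    and dTX: "rl_has_derivative_within a b m n (\<lambda>y. T (X y)) Y' s S"
  shows "rl_ip a b m n X' (Ts w) = rl_ip a b m n Y' w"
proof -
  let ?ip = "rl_ip a b m n" and ?F = "at s within S"
  define qX where "qX = (\<lambda>y. rl_scale (1 / (y - s)) (rl_diff (X y) (X s)))"
  define qT where "qT = (\<lambda>y. rl_scale (1 / (y - s)) (rl_diff (T (X y)) (T (X s))))"
  have Tsw: "in_RL2 a b m n (Ts w)" using adj w by (rule is_adjoint_in_RL2)
  have ev_q: "eventually (\<lambda>y. in_RL2 a b m n (qX y) \<and> in_RL2 a b m n (qT y)) ?F"
    using ev by eventually_elim (simp add: qX_def qT_def in_RL2_scale in_RL2_diff Xs T)
  have "((\<lambda>y. ?ip (qX y) (Ts w)) \<longlongrightarrow> ?ip X' (Ts w)) ?F"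
    using dX unfolding rl_has_derivative_within_def qX_def[symmetric]
    by (intro tendsto_rl_ip[OF eventually_mono[OF ev_q] X' Tsw _ rl_tendsto_const]) (simp_all add: Tsw)
  moreover have "((\<lambda>y. ?ip (qT y) w) \<longlongrightarrow> ?ip Y' w) ?F"
    using dTX unfolding rl_has_derivative_within_def qT_def[symmetric]
    by (intro tendsto_rl_ip[OF eventually_mono[OF ev_q] Y' w _ rl_tendsto_const]) (simp_all add: w)
  moreover have "eventually (\<lambda>y. ?ip (qT y) w = ?ip (qX y) (Ts w)) ?F"
    using ev
  proof eventually_elim
    case (elim y)
    then show ?case
      using w Xs Tsw T[OF elim] T[OF Xs] is_adjoint_rl_ip[OF adj _ w]
      by (simp add: qX_def qT_def rl_ip_scale_left rl_ip_diff_left)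
  qed
  ultimately show ?thesis
    using nontrivial by (metis (mono_tags) tendsto_cong tendsto_unique)
qed

lemma at_within_atLeast_neq_bot: "c \<le> s \<Longrightarrow> at s within {c..} \<noteq> (bot :: real filter)"
  by (metis at_le atLeast_iff greaterThan_iff less_imp_le order.trans subsetI
      bot.extremum_uniqueI trivial_limit_at_right_real)

section \<open>Duality of the auxiliary PIEs\<close>

lemma has_field_derivative_solution_pairing:
  assumes T: "\<And>u. in_RL2 a b m n u \<Longrightarrow> in_RL2 a b m n (T u)"
    and A: "\<And>u. in_RL2 a b m n u \<Longrightarrow> in_RL2 a b m n (A u)"
    and adjT: "is_adjoint a b m n m n T Ts" and adjA: "is_adjoint a b m n m n A As"
    and X: "aux_sol a b m n T A B v X" and Y: "aux_sol a b m n Ts As Cs vb Y"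
    and s: "s \<in> {0..t}"
  shows "((\<lambda>y. rl_ip a b m n (X y) (Ts (Y (t - y)))) has_field_derivative 0) (at s within {0..t})"
proof -
  let ?ip = "rl_ip a b m n"
  let ?u = "t - s"
  have s0: "0 \<le> s" and u0: "0 \<le> ?u" using s by auto
  have X_RL2: "\<And>y. 0 \<le> y \<Longrightarrow> in_RL2 a b m n (X y)"
    and Y_RL2: "\<And>y. 0 \<le> y \<Longrightarrow> in_RL2 a b m n (Y y)"
    using X Y by (simp_all add: aux_sol_def)
  obtain X' where X': "\<And>y. 0 \<le> y \<Longrightarrow> in_RL2 a b m n (X' y) \<and> has_rl_deriv a b m n X X' y"
    using X unfolding aux_sol_def rl_C1_def by blast
  have X's: "in_RL2 a b m n (X' s)" and dX: "rl_has_derivative_within a b m n X (X' s) s {0..}"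
    using X'[OF s0] by (auto intro: has_rl_deriv_imp_rl_has_derivative_within)
  have dTX: "rl_has_derivative_within a b m n (\<lambda>y. T (X y)) (A (X s)) s {0..}"
    using X s0 by (auto simp: aux_sol_def intro: has_rl_deriv_imp_rl_has_derivative_within)
  have dTsY: "rl_has_derivative_within a b m n (\<lambda>y. Ts (Y y)) (As (Y ?u)) ?u {0..}"
    using Y u0 by (auto simp: aux_sol_def intro: has_rl_deriv_imp_rl_has_derivative_within)
  have Xs: "in_RL2 a b m n (X s)" and Yu: "in_RL2 a b m n (Y ?u)"
    using X_RL2[OF s0] Y_RL2[OF u0] .
  have As_Yu: "in_RL2 a b m n (As (Y ?u))" using adjA Yu by (rule is_adjoint_in_RL2)
  \<comment> \<open>adjointness turns difference quotients of \<open>T X\<close> tested against \<open>Y\<close> into those of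
    \<open>X\<close> tested against \<open>T\<^sup>* Y\<close>; this stands in for \<open>T X' = A X\<close>\<close>
  have weak: "?ip (X' s) (Ts (Y ?u)) = ?ip (A (X s)) (Y ?u)"
  proof (rule rl_ip_derivative_adjoint
      [OF at_within_atLeast_neq_bot[OF s0] T adjT _ Xs X's A[OF Xs] Yu dX dTX])
    show "eventually (\<lambda>y. in_RL2 a b m n (X y)) (at s within {0..})"
      using eventually_at_within_neq_mem[of s "{0..}"] by eventually_elim (simp add: X_RL2)
  qed
  have "((\<lambda>y. ?ip (X y) (Ts (Y (t - y)))) has_field_derivative
      ?ip (X' s) (Ts (Y ?u)) + ?ip (X s) (rl_scale (-1) (As (Y ?u)))) (at s within {0..t})"
  proof (rule has_field_derivative_rl_ip)
    show "eventually (\<lambda>y. in_RL2 a b m n (X y) \<and> in_RL2 a b m n (Ts (Y (t - y)))) (at s within {0..t})"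
      using eventually_at_within_neq_mem[of s "{0..t}"]
      by eventually_elim (auto simp: X_RL2 Y_RL2 intro: is_adjoint_in_RL2[OF adjT])
    show "rl_has_derivative_within a b m n X (X' s) s {0..t}"
      using dX by (rule rl_has_derivative_within_subset) auto
    show "rl_has_derivative_within a b m n (\<lambda>y. Ts (Y (t - y))) (rl_scale (-1) (As (Y ?u))) s {0..t}"
      using rl_has_derivative_within_reflect[OF dTsY, of t]
      by (simp add: rl_has_derivative_within_subset)
  qed (use Xs Yu As_Yu X's in \<open>auto intro: is_adjoint_in_RL2[OF adjT] in_RL2_scale\<close>)
  also have "?ip (X' s) (Ts (Y ?u)) + ?ip (X s) (rl_scale (-1) (As (Y ?u))) = 0"
    using weak is_adjoint_rl_ip[OF adjA Xs Yu] by (simp add: rl_ip_scale_right)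
  finally show ?thesis .
qed

lemma aux_sol_duality:
  assumes T: "\<And>u. in_RL2 a b m n u \<Longrightarrow> in_RL2 a b m n (T u)"
    and A: "\<And>u. in_RL2 a b m n u \<Longrightarrow> in_RL2 a b m n (A u)"
    and Bv: "in_RL2 a b m n (B v)"
    and adjT: "is_adjoint a b m n m n T Ts" and adjA: "is_adjoint a b m n m n A As"
    and adjB: "is_adjoint a b nw 0 m n B Bs" and adjC: "is_adjoint a b m n nz 0 C Cs"
    and X: "aux_sol a b m n T A B v X" and Y: "aux_sol a b m n Ts As Cs vb Y"
    and t: "0 \<le> t"
  shows "rl_ip a b nz 0 (C (X t)) vb = rl_ip a b nw 0 v (Bs (Y t))"
proof -
  let ?ip = "rl_ip a b m n"
  define \<phi> where "\<phi> y = ?ip (X y) (Ts (Y (t - y)))" for y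
  have X0: "in_RL2 a b m n (X 0)" and Xt: "in_RL2 a b m n (X t)"
    and Y0: "in_RL2 a b m n (Y 0)" and Yt: "in_RL2 a b m n (Y t)"
    and X_init: "rl_norm a b m n (rl_diff (T (X 0)) (B v)) = 0"
    and Y_init: "rl_norm a b m n (rl_diff (Ts (Y 0)) (Cs vb)) = 0"
    using X Y t by (simp_all add: aux_sol_def)
  have Csvb: "in_RL2 a b m n (Cs vb)" using adjC by (rule is_adjoint_in_RL2) simp
  obtain c where "\<forall>y\<in>{0..t}. \<phi> y = c"
    using has_field_derivative_zero_constant[of "{0..t}" \<phi>]
      has_field_derivative_solution_pairing[OF T A adjT adjA X Y] unfolding \<phi>_def by auto
  then have "\<phi> 0 = \<phi> t" using t by auto
  moreover have "\<phi> 0 = rl_ip a b nw 0 v (Bs (Y t))"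
  proof -
    have "\<phi> 0 = ?ip (T (X 0)) (Y t)" using is_adjoint_rl_ip[OF adjT X0 Yt] by (simp add: \<phi>_def)
    also have "\<dots> = ?ip (B v) (Y t)" by (rule rl_ip_left_eq_if_null_diff[OF T[OF X0] Bv Yt X_init])
    also have "\<dots> = rl_ip a b nw 0 v (Bs (Y t))" using adjB Yt by (simp add: is_adjoint_rl_ip)
    finally show ?thesis .
  qed
  moreover have "\<phi> t = rl_ip a b nz 0 (C (X t)) vb"
  proof -
    have "\<phi> t = ?ip (Ts (Y 0)) (X t)" by (simp add: \<phi>_def rl_ip_commute)
    also have "\<dots> = ?ip (Cs vb) (X t)"
      by (rule rl_ip_left_eq_if_null_diff[OF is_adjoint_in_RL2[OF adjT Y0] Csvb Xt Y_init])
    also have "\<dots> = rl_ip a b nz 0 (C (X t)) vb"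
      using is_adjoint_rl_ip[OF adjC Xt] by (simp add: rl_ip_commute)
    finally show ?thesis .
  qed
  ultimately show ?thesis by simp
qed

lemma well_posed_imp_aux_sol_exists: "well_posed a b m n k T A B \<Longrightarrow> \<exists>X. aux_sol a b m n T A B v X"
  unfolding well_posed_def using in_RL2_finite_dim by blast

lemma ip_norm_le_by_duality:
  assumes dual_exists: "\<And>vb. \<exists>Y. aux_sol a b m n T2 A2 B2 vb Y"
    and duality: "\<And>v X vb Y t. aux_sol a b m n T1 A1 B1 v X \<Longrightarrow> aux_sol a b m n T2 A2 B2 vb Y \<Longrightarrow>
      0 \<le> t \<Longrightarrow> rl_ip a b nz 0 (C1 (X t)) vb = rl_ip a b nw 0 v (C2 (Y t))"
  shows "ip_norm a b m n nw nz T1 A1 B1 C1 \<le> ip_norm a b m n nz nw T2 A2 B2 C2"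
  unfolding ip_norm_def
proof (rule Sup_least)
  let ?S2 = "{ennreal (rl_norm a b nw 0 (C2 (Y t))) | vb Y t.
     in_RL2 a b nz 0 vb \<and> rl_norm a b nz 0 vb = 1 \<and> aux_sol a b m n T2 A2 B2 vb Y \<and> t \<ge> 0}"
  fix e
  assume "e \<in> {ennreal (rl_norm a b nz 0 (C1 (X t))) | v X t.
     in_RL2 a b nw 0 v \<and> rl_norm a b nw 0 v = 1 \<and> aux_sol a b m n T1 A1 B1 v X \<and> t \<ge> 0}"
  then obtain v X t where e: "e = ennreal (rl_norm a b nz 0 (C1 (X t)))"
    and v: "rl_norm a b nw 0 v = 1" and X: "aux_sol a b m n T1 A1 B1 v X" and t: "0 \<le> t"
    by blast
  let ?z = "C1 (X t)"
  let ?r = "rl_norm a b nz 0 ?z"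
  show "e \<le> Sup ?S2"
  proof (cases "?r = 0")
    case True
    then show ?thesis using e by simp
  next
    case False
    then have r: "?r > 0" using rl_norm_nonneg[of a b nz 0 ?z] by linarith
    define vb where "vb = rl_scale (1 / ?r) ?z"
    have vb: "rl_norm a b nz 0 vb = 1" using r by (simp add: vb_def rl_norm_scale)
    obtain Y where Y: "aux_sol a b m n T2 A2 B2 vb Y" using dual_exists by blast
    have "?r = rl_ip a b nz 0 ?z vb"
      using r by (simp add: vb_def rl_ip_scale_right flip: rl_norm_power2) (simp add: power2_eq_square)
    also have "\<dots> = rl_ip a b nw 0 v (C2 (Y t))" by (rule duality[OF X Y t])
    also have "\<dots> \<le> rl_norm a b nw 0 (C2 (Y t))"
      using rl_ip_Cauchy_Schwarz[of a b nw 0 v "C2 (Y t)"] v by simp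
    finally have "e \<le> ennreal (rl_norm a b nw 0 (C2 (Y t)))" using e by (simp add: ennreal_leI)
    also have "\<dots> \<le> Sup ?S2" using vb Y t in_RL2_finite_dim by (intro Sup_upper) blast
    finally show ?thesis .
  qed
qed

theorem theorem1:
  fixes a b :: real and m n nw nz :: nat
    and T A B C Ts As Bs Cs :: "rl2 \<Rightarrow> rl2"
  assumes "a < b"
    and "is_4PI a b m n m n T" and "is_4PI a b m n m n A"
    and "is_4PI a b nw 0 m n B" and "is_4PI a b m n nz 0 C"
    and "is_adjoint a b m n m n T Ts" and "is_adjoint a b m n m n A As"
    and "is_adjoint a b nw 0 m n B Bs" and "is_adjoint a b m n nz 0 C Cs"
    and "well_posed a b m n nw T A B"
    and "well_posed a b m n nz Ts As Cs"
  shows "ip_norm a b m n nw nz T A B C = ip_norm a b m n nz nw Ts As Cs Bs"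
proof -
  have T: "\<And>u. in_RL2 a b m n u \<Longrightarrow> in_RL2 a b m n (T u)"
    and A: "\<And>u. in_RL2 a b m n u \<Longrightarrow> in_RL2 a b m n (A u)"
    and Bv: "\<And>v. in_RL2 a b m n (B v)"
    using is_4PI_in_RL2 assms(2,3,4) in_RL2_finite_dim by blast+
  have primal_exists: "\<And>v. \<exists>X. aux_sol a b m n T A B v X"
    and dual_exists: "\<And>vb. \<exists>Y. aux_sol a b m n Ts As Cs vb Y"
    using assms(10,11) by (simp_all add: well_posed_imp_aux_sol_exists)
  note duality = aux_sol_duality[OF T A Bv assms(6-9)]
  show ?thesis
  proof (rule antisym)
    show "ip_norm a b m n nw nz T A B C \<le> ip_norm a b m n nz nw Ts As Cs Bs"
      using dual_exists duality by (rule ip_norm_le_by_duality)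
    show "ip_norm a b m n nz nw Ts As Cs Bs \<le> ip_norm a b m n nw nz T A B C"
      using primal_exists by (rule ip_norm_le_by_duality) (metis duality rl_ip_commute)
  qed
qed

end
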